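(* Let $R\subseteq T$ be an extension of rings. Suppose $V$ is a maximal subring of $T$ and $x\in U(R)\setminus V$ satisfies $xV=Vx$ (in particular this holds if $V$ is a duo ring). If $x^{-1}\in V$ (in particular, if $V$ is left integrally closed in $T$), then $R$ has a maximal subring.
   Context: All rings are associative with identity $1\neq0$; subrings contain the identity. A maximal subring of $T$ is a proper subring with no subring strictly between it and $T$. $U(R)$ is the unit group of $R$. A ring is duo if every one-sided ideal is two-sided. $t\in T$ is left integral over $V$ if $t^n+v_{n-1}t^{n-1}+\cdots+v_1t+v_0=0$ for some $n\geq1$ and $v_i\in V$ (coefficients on the left); $V$ is left integrally closed in $T$ if every element of $T$ left integral over $V$ lies in $V$. *)

theory Defs
  imports Main
begin

definition is_subring :: "'a::ring_1 set \<Rightarrow> bool" where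
  "is_subring S \<longleftrightarrow> 1 \<in> S \<and> (\<forall>a\<in>S. \<forall>b\<in>S. a - b \<in> S \<and> a * b \<in> S)"

definition maximal_subring :: "'a::ring_1 set \<Rightarrow> 'a set \<Rightarrow> bool" where
  "maximal_subring M A \<longleftrightarrow> is_subring M \<and> M \<subseteq> A \<and> M \<noteq> A \<and>
     (\<forall>W. is_subring W \<and> M \<subseteq> W \<and> W \<subseteq> A \<longrightarrow> W = M \<or> W = A)"

definition ring_units :: "'a::ring_1 set \<Rightarrow> 'a set" where
  "ring_units R = {x \<in> R. \<exists>y\<in>R. x * y = 1 \<and> y * x = 1}"

end

theory Submission
  imports Defs
begin

text \<open>Since \<open>xV = Vx\<close>, the set \<open>V[x] = {v x\<^sup>n}\<close> is a subring of \<open>T\<close>, and it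
contains \<open>x\<^sup>-\<^sup>1 \<in> V\<close>, so differences can be brought to a common power of \<open>x\<close>.
It properly contains \<open>V\<close>, hence equals \<open>T\<close> by maximality. Writing \<open>r \<in> R\<close> as
\<open>r = v x\<^sup>n\<close> gives \<open>v = r x\<^sup>-\<^sup>n \<in> R \<inter> V\<close>, so \<open>R\<close> is generated over \<open>R \<inter> V\<close> by the
single element \<open>x \<notin> R \<inter> V\<close>. By Zorn there is a subring of \<open>R\<close> maximal among those
containing \<open>R \<inter> V\<close> but not \<open>x\<close>; any larger subring of \<open>R\<close> contains \<open>x\<close>, hence all
of \<open>R\<close>.\<close>

lemma is_subring_power:
  assumes "is_subring S" "a \<in> S"
  shows "a ^ n \<in> S"
  by (induction n) (use assms in \<open>auto simp: is_subring_def\<close>)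

lemma is_subring_Union_chain:
  assumes "C \<noteq> {}" "subset.chain {W. is_subring W} C"
  shows "is_subring (\<Union>C)"
  unfolding is_subring_def
proof (intro conjI ballI)
  show "1 \<in> \<Union>C" using assms unfolding subset.chain_def is_subring_def by blast
next
  fix a b assume "a \<in> \<Union>C" "b \<in> \<Union>C"
  then obtain D where "D \<in> C" "a \<in> D" "b \<in> D"
    using assms(2) unfolding subset.chain_def by blast
  moreover have "is_subring D" using \<open>D \<in> C\<close> assms(2) unfolding subset.chain_def by blast
  ultimately show "a - b \<in> \<Union>C" "a * b \<in> \<Union>C" unfolding is_subring_def by blast+
qed

lemma left_inverse_power:
  fixes x y :: "'a::monoid_mult"
  assumes "y * x = 1"
  shows "y ^ n * x ^ n = 1"
proof (induction n)
  case (Suc n)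
  have "y ^ Suc n * x ^ Suc n = y ^ n * (y * x) * x ^ n"
    by (simp only: power_Suc2[of y] power_Suc[of x] mult.assoc)
  then show ?case using Suc assms by simp
qed simp

lemma left_inverse_power_diff:
  fixes x y :: "'a::monoid_mult"
  assumes "y * x = 1" "n \<le> m"
  shows "y ^ (m - n) * x ^ m = x ^ n"
proof -
  have "x ^ m = x ^ (m - n) * x ^ n" using assms(2) by (simp flip: power_add)
  then show ?thesis using left_inverse_power[OF assms(1)] by (simp flip: mult.assoc)
qed

lemma power_mult_normalizing:
  fixes x :: "'a::monoid_mult"
  assumes "(\<lambda>v. x * v) ` V = (\<lambda>v. v * x) ` V" "w \<in> V"
  shows "\<exists>w'\<in>V. x ^ n * w = w' * x ^ n"
proof (induction n)
  case (Suc n)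
  then obtain w1 where w1: "w1 \<in> V" "x ^ n * w = w1 * x ^ n" by blast
  then obtain w2 where w2: "w2 \<in> V" "x * w1 = w2 * x" using assms(1) by blast
  have "x ^ Suc n * w = x * (x ^ n * w)" by (simp only: power_Suc mult.assoc)
  also have "\<dots> = (x * w1) * x ^ n" using w1(2) by (simp only: mult.assoc)
  also have "\<dots> = w2 * x ^ Suc n" using w2 by (simp add: mult.assoc power_commutes)
  finally show ?case using w2 by blast
qed (use assms in auto)

lemma is_subring_right_powers:
  assumes "is_subring V" "(\<lambda>v. x * v) ` V = (\<lambda>v. v * x) ` V"
    and "y * x = 1" "y \<in> V"
  shows "is_subring {v * x ^ n | v n. v \<in> V}" (is "is_subring ?S")
  unfolding is_subring_def
proof (intro conjI ballI)
  show "1 \<in> ?S" using assms(1) unfolding is_subring_def by (force intro: exI[of _ 0])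
next
  fix a b assume "a \<in> ?S" "b \<in> ?S"
  then obtain v n w m where a: "a = v * x ^ n" "v \<in> V" and b: "b = w * x ^ m" "w \<in> V"
    by blast
  have y_pow: "y ^ k \<in> V" for k using is_subring_power[OF assms(1,4)] .
  obtain w' where w': "w' \<in> V" "x ^ n * w = w' * x ^ n"
    using power_mult_normalizing[OF assms(2) b(2)] by blast
  have "a * b = v * (x ^ n * w) * x ^ m" using a b by (simp add: mult.assoc)
  also have "\<dots> = (v * w') * x ^ (n + m)" using w'(2) by (simp add: mult.assoc power_add)
  finally have "a * b = (v * w') * x ^ (n + m)" .
  moreover have "v * w' \<in> V" using assms(1) a(2) w'(1) by (simp add: is_subring_def)
  ultimately show "a * b \<in> ?S" by blast
  show "a - b \<in> ?S"
  proof (cases "n \<le> m")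
    case True
    then have "a - b = (v * y ^ (m - n) - w) * x ^ m"
      using a b left_inverse_power_diff[OF assms(3)] by (simp add: algebra_simps mult.assoc)
    moreover have "v * y ^ (m - n) - w \<in> V" using assms(1) a(2) b(2) y_pow
      by (simp add: is_subring_def)
    ultimately show ?thesis by blast
  next
    case False
    then have "a - b = (v - w * y ^ (n - m)) * x ^ n"
      using a b left_inverse_power_diff[OF assms(3), of m n] by (simp add: algebra_simps mult.assoc)
    moreover have "v - w * y ^ (n - m) \<in> V" using assms(1) a(2) b(2) y_pow
      by (simp add: is_subring_def)
    ultimately show ?thesis by blast
  qed
qed

lemma maximal_subring_if_generated_by_element:
  assumes "is_subring S" "S \<subseteq> R" "x \<in> R" "x \<notin> S"
    and gen: "\<And>r. r \<in> R \<Longrightarrow> \<exists>s\<in>S. \<exists>n. r = s * x ^ n"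
  shows "\<exists>M. maximal_subring M R"
proof -
  define F where "F = {W. is_subring W \<and> S \<subseteq> W \<and> W \<subseteq> R \<and> x \<notin> W}"
  have "\<exists>M\<in>F. \<forall>X\<in>F. M \<subseteq> X \<longrightarrow> X = M"
  proof (rule subset_Zorn_nonempty)
    show "F \<noteq> {}" using assms unfolding F_def by blast
  next
    fix C assume C: "C \<noteq> {}" "subset.chain F C"
    then have "C \<subseteq> F" unfolding subset.chain_def by blast
    moreover have "is_subring (\<Union>C)"
    proof (rule is_subring_Union_chain[OF C(1)])
      show "subset.chain {W. is_subring W} C"
        using C(2) unfolding subset.chain_def F_def by blast
    qed
    ultimately show "\<Union>C \<in> F" using C(1) unfolding F_def by blast
  qed
  then obtain M where M: "M \<in> F" and M_max: "\<And>X. X \<in> F \<Longrightarrow> M \<subseteq> X \<Longrightarrow> X = M" by blast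
  have "maximal_subring M R"
    unfolding maximal_subring_def
  proof (intro conjI allI impI)
    show "is_subring M" "M \<subseteq> R" using M unfolding F_def by simp_all
    show "M \<noteq> R" using M assms(3) unfolding F_def by blast
  next
    fix W assume W: "is_subring W \<and> M \<subseteq> W \<and> W \<subseteq> R"
    show "W = M \<or> W = R"
    proof (cases "x \<in> W")
      case False
      then show ?thesis using W M M_max unfolding F_def by blast
    next
      case True
      have "R \<subseteq> W"
      proof
        fix r assume "r \<in> R"
        then obtain s n where "s \<in> S" "r = s * x ^ n" using gen by blast
        moreover have "s \<in> W" using \<open>s \<in> S\<close> W M unfolding F_def by blast
        ultimately show "r \<in> W"
          using W is_subring_power[of W x n] True unfolding is_subring_def by blast
      qed
      then show ?thesis using W by blast
    qed
  qed
  then show ?thesis by blast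
qed

theorem proposition3p3:
  fixes R V :: "'a::ring_1 set" and x y :: 'a
  assumes "is_subring R"
    and "maximal_subring V (UNIV :: 'a set)"
    and "x \<in> ring_units R" and "x \<notin> V"
    and "(\<lambda>v. x * v) ` V = (\<lambda>v. v * x) ` V"
    and "x * y = 1" and "y * x = 1"
    and "y \<in> V"
  shows "\<exists>M. maximal_subring M R"
proof -
  have V: "is_subring V" using assms(2) unfolding maximal_subring_def by blast
  obtain z where z: "z \<in> R" "x * z = 1" and x_R: "x \<in> R"
    using assms(3) unfolding ring_units_def by blast
  have "y = z" using z(2) assms(7) by (metis mult.assoc mult_1_left mult_1_right)
  then have y_R: "y \<in> R" using z(1) by simp
  let ?S = "{v * x ^ n | v n. v \<in> V}"
  have "?S = UNIV"
  proof -
    have "V \<subseteq> ?S" by (force intro: exI[of _ 0])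
    moreover have "x \<in> ?S" using V unfolding is_subring_def by (force intro!: exI[of _ 1])
    ultimately show ?thesis using assms(2,4) is_subring_right_powers[OF V assms(5,7,8)]
      unfolding maximal_subring_def by blast
  qed
  have "\<exists>s\<in>R \<inter> V. \<exists>n. r = s * x ^ n" if "r \<in> R" for r
  proof -
    obtain v n where v: "v \<in> V" "r = v * x ^ n" using \<open>?S = UNIV\<close> by blast
    then have "v = r * y ^ n" using left_inverse_power[OF assms(6)] by (simp add: mult.assoc)
    then have "v \<in> R" using that is_subring_power[OF assms(1) y_R] assms(1)
      by (simp add: is_subring_def)
    then show ?thesis using v by blast
  qed
  moreover have "is_subring (R \<inter> V)" using assms(1) V unfolding is_subring_def by blast
  ultimately show ?thesis
    using maximal_subring_if_generated_by_element[of "R \<inter> V" R x] x_R assms(4) by blast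
qed

end
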